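(* Let $\hat g_{\ell,1},\hat g_{\ell,2}>0$ with $\hat g_{\ell,1}>\hat g_{\ell,2}$, let $\rho_\ell>0$, and let $R_{\rm sum}$ be a positive integer. Let $x^\star_\ell$ be the minimizer over $x\ge0$ of $\hat p_\ell(x)=\frac{(k_\ell+x)\hat g_{\ell,2}}{x+1}\exp\!\big(-\frac{x}{(x+1)^2}\beta_\ell\big)$, where $k_\ell=\hat g_{\ell,1}/\hat g_{\ell,2}$ and $\beta_\ell=R_{\rm sum}\rho_\ell$ (with $x^\star_\ell=\infty$ allowed). Define the beam allocation $$(r^\star_{\ell,1},r^\star_{\ell,2})=\begin{cases}\Big(\Big\lfloor\dfrac{R_{\rm sum}}{x^\star_\ell+1}\Big\rfloor,\Big\lfloor\dfrac{x^\star_\ell R_{\rm sum}}{x^\star_\ell+1}\Big\rfloor\Big), & \text{if } \dfrac{R_{\rm sum}}{x^\star_\ell+1}>1,\\[2mm] (1,R_{\rm sum}-1), & \text{if } \dfrac{R_{\rm sum}}{x^\star_\ell+1}\le 1.\end{cases}$$ Then $r^\star_{\ell,1}\le r^\star_{\ell,2}$.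
   Context: Setting: beam alignment with two beam candidates with prior probabilities $\hat g_{\ell,1},\hat g_{\ell,2}$ of being the optimal beam, repeated $r_{\ell,1},r_{\ell,2}$ times with $r_{\ell,1}+r_{\ell,2}\le R_{\rm sum}$, chosen to minimize the miss-determination bound $\frac{r_{\ell,1}\hat g_{\ell,1}+r_{\ell,2}\hat g_{\ell,2}}{R_{\rm sum}}\exp(-\frac{r_{\ell,1}r_{\ell,2}}{R_{\rm sum}}\rho_\ell)$; the displayed rounded allocation derived from the relaxed optimal ratio $x^\star_\ell=r_{\ell,2}/r_{\ell,1}$ is the paper's solution of this problem. It is known (Theorem 1 of the paper) that $x^\star_\ell>1$ when $\hat g_{\ell,1}>\hat g_{\ell,2}$. *)

theory Defs
  imports "HOL-Analysis.Analysis"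
begin

definition p_hat :: "real \<Rightarrow> real \<Rightarrow> real \<Rightarrow> real \<Rightarrow> real" where
  "p_hat g1 g2 \<beta> x = (g1 / g2 + x) * g2 / (x + 1) * exp (- (x / (x + 1)^2) * \<beta>)"

definition is_ext_minimizer :: "(real \<Rightarrow> real) \<Rightarrow> ereal \<Rightarrow> bool" where
  "is_ext_minimizer f xs \<longleftrightarrow>
     (case xs of
        ereal x \<Rightarrow> x \<ge> 0 \<and> (\<forall>y\<ge>0. f x \<le> f y)
      | PInfty \<Rightarrow> (\<forall>x\<ge>0. \<exists>y\<ge>0. f y < f x) \<and> (f \<longlongrightarrow> (INF y\<in>{0..}. f y)) at_top
      | MInfty \<Rightarrow> False)"

text \<open>Rounded beam allocation (r1, r2) from the ratio xs; for xs = infinity,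
  R/(xs+1) = 0 \<le> 1, so the second branch applies.\<close>
definition beam_alloc :: "nat \<Rightarrow> ereal \<Rightarrow> nat \<times> nat" where
  "beam_alloc R xs =
     (case xs of
        ereal x \<Rightarrow> (if real R / (x + 1) > 1
                    then (nat \<lfloor>real R / (x + 1)\<rfloor>, nat \<lfloor>x * real R / (x + 1)\<rfloor>)
                    else (1, R - 1))
      | _ \<Rightarrow> (1, R - 1))"

end

theory Submission
  imports Defs
begin

text \<open>The exponent x/(x+1)^2 is invariant under x \<mapsto> 1/x, while the prefactor
  (g1 + x g2)/(x+1) becomes (g1 x + g2)/(x+1), which is strictly smaller when x < 1 and
  g1 > g2. So no point of [0,1) minimizes p_hat (the point 0 is beaten by 1 instead), hence
  x* \<ge> 1, and then R/(x*+1) \<le> x* R/(x*+1) survives rounding down.\<close>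

lemma p_hat_eq:
  assumes "g2 \<noteq> 0"
  shows "p_hat g1 g2 \<beta> x = (g1 + x * g2) / (x + 1) * exp (- (x / (x + 1)^2) * \<beta>)"
proof -
  have "(g1 / g2 + x) * g2 = g1 + x * g2"
    using assms by (simp add: field_simps)
  then show ?thesis
    by (simp add: p_hat_def)
qed

lemma p_hat_inverse:
  assumes "g2 \<noteq> 0" and "x > 0"
  shows "p_hat g1 g2 \<beta> (1 / x) = (g1 * x + g2) / (x + 1) * exp (- (x / (x + 1)^2) * \<beta>)"
proof -
  have exponent: "(1 / x) / (1 / x + 1)^2 = x / (x + 1)^2"
    using assms(2) by (simp add: field_simps power2_eq_square)
  have "g1 + (1 / x) * g2 = (g1 * x + g2) / x" and "1 / x + 1 = (x + 1) / x"
    using assms(2) by (simp_all add: field_simps)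
  then have prefactor: "(g1 + (1 / x) * g2) / (1 / x + 1) = (g1 * x + g2) / (x + 1)"
    using assms(2) by simp
  show ?thesis
    unfolding p_hat_eq[OF assms(1)] exponent prefactor ..
qed

lemma p_hat_inverse_less:
  assumes "0 < g2" and "g2 < g1" and "0 < x" and "x < 1"
  shows "p_hat g1 g2 \<beta> (1 / x) < p_hat g1 g2 \<beta> x"
proof -
  have g2: "g2 \<noteq> 0"
    using assms(1) by simp
  have "(g1 - g2) * (1 - x) > 0"
    using assms by simp
  then have "(g1 * x + g2) / (x + 1) < (g1 + x * g2) / (x + 1)"
    using assms(3) by (simp add: algebra_simps divide_strict_right_mono)
  then have "(g1 * x + g2) / (x + 1) * exp (- (x / (x + 1)^2) * \<beta>)
      < (g1 + x * g2) / (x + 1) * exp (- (x / (x + 1)^2) * \<beta>)"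
    by (rule mult_strict_right_mono) simp
  then show ?thesis
    by (simp only: p_hat_inverse[OF g2 assms(3)] p_hat_eq[OF g2, of g1 \<beta> x])
qed

lemma p_hat_one_less_zero:
  assumes "0 < g2" and "g2 < g1" and "0 \<le> \<beta>"
  shows "p_hat g1 g2 \<beta> 1 < p_hat g1 g2 \<beta> 0"
proof -
  have "p_hat g1 g2 \<beta> 1 = (g1 + g2) / 2 * exp (- \<beta> / 4)"
    using assms(1) by (simp add: p_hat_eq)
  also have "\<dots> \<le> (g1 + g2) / 2"
    using assms by (intro mult_left_le) auto
  also have "\<dots> < p_hat g1 g2 \<beta> 0"
    using assms by (simp add: p_hat_eq)
  finally show ?thesis .
qed

lemma p_hat_minimizer_ge_one:
  assumes "0 < g2" and "g2 < g1" and "0 \<le> \<beta>"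
    and "0 \<le> x" and min: "\<forall>y\<ge>0. p_hat g1 g2 \<beta> x \<le> p_hat g1 g2 \<beta> y"
  shows "1 \<le> x"
proof (rule ccontr)
  assume "\<not> 1 \<le> x"
  then consider "x = 0" | "0 < x" "x < 1"
    using assms(4) by linarith
  then show False
  proof cases
    case 1
    have "p_hat g1 g2 \<beta> x \<le> p_hat g1 g2 \<beta> 1"
      using min by simp
    then show False
      using 1 p_hat_one_less_zero[OF assms(1-3)] by simp
  next
    case 2
    then have "p_hat g1 g2 \<beta> x \<le> p_hat g1 g2 \<beta> (1 / x)"
      using min by simp
    then show False
      using p_hat_inverse_less[OF assms(1,2) 2, of \<beta>] by simp
  qed
qed

lemma ext_minimizer_p_hat_ge_one:
  assumes "0 < g2" and "g2 < g1" and "0 \<le> \<beta>"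
    and "is_ext_minimizer (p_hat g1 g2 \<beta>) xs"
  shows "1 \<le> xs"
  using assms(4) p_hat_minimizer_ge_one[OF assms(1-3)]
  by (cases xs) (auto simp: is_ext_minimizer_def)

lemma beam_alloc_fst_le_snd:
  assumes "1 \<le> xs" and "2 \<le> R"
  shows "fst (beam_alloc R xs) \<le> snd (beam_alloc R xs)"
proof (cases xs)
  case (real x)
  with assms(1) have "1 \<le> x"
    by simp
  then have "real R / (x + 1) \<le> x * real R / (x + 1)"
    by (intro divide_right_mono) (auto simp: mult_le_cancel_right1)
  then have "nat \<lfloor>real R / (x + 1)\<rfloor> \<le> nat \<lfloor>x * real R / (x + 1)\<rfloor>"
    by (intro nat_mono floor_mono)
  then show ?thesis
    using real assms(2) by (auto simp: beam_alloc_def)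
qed (use assms in \<open>auto simp: beam_alloc_def\<close>)

theorem corollary1:
  fixes g1 g2 \<rho> :: real and R :: nat and xs :: ereal
  assumes "g1 > 0" and "g2 > 0" and "g1 > g2" and "\<rho> > 0"
    and "R \<ge> 2"
    and "is_ext_minimizer (p_hat g1 g2 (real R * \<rho>)) xs"
  shows "fst (beam_alloc R xs) \<le> snd (beam_alloc R xs)"
proof -
  have "0 \<le> real R * \<rho>"
    using assms(4) by simp
  with assms(2,3,6) have "1 \<le> xs"
    by (intro ext_minimizer_p_hat_ge_one)
  then show ?thesis
    using assms(5) by (rule beam_alloc_fst_le_snd)
qed

end
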